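(* Let $G$ be a group and $A\subseteq G$ a nonempty finite set. (a) For any nonempty finite $B\subseteq G$: $\operatorname{VC}^\ell_B(A)=0$ iff $|BA|=|A|$, and $\operatorname{VC}^r_B(A)=0$ iff $|AB|=|A|$. (b) The following are equivalent: (i) $\operatorname{VC}^\ell_{A^{-1}}(A)=0$; (ii) $\operatorname{VC}^r_{A^{-1}}(A)=0$; (iii) $|AA^{-1}|=|A|$; (iv) $|A^{-1}A|=|A|$; (v) $A$ is a coset of a subgroup of $G$. (c) The following are equivalent: (i) $\operatorname{VC}^\ell_A(A)=0$; (ii) $\operatorname{VC}^r_A(A)=0$; (iii) $|AA|=|A|$; (iv) $A=aH$ for some subgroup $H\leq G$ and $a\in G$ with $aH=Ha$.
   Context: $AB=\{ab\}$, $A^{-1}=\{a^{-1}\}$. A set system $\mathcal F$ on $X$ shatters $Y\subseteq X$ if $\{Y\cap S:S\in\mathcal F\}$ is the power set of $Y$; $\operatorname{VC}(\mathcal F)$ is the maximum size of a finite shattered set (so the empty set is shattered by any nonempty system). $\operatorname{VC}^\ell_B(A)=\operatorname{VC}(\{xA:x\in B\})$, $\operatorname{VC}^r_B(A)=\operatorname{VC}(\{Ax:x\in B\})$. *)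

theory Defs
  imports "HOL-Algebra.Coset" "HOL-Library.Extended_Nat"
begin

definition shatters :: "'a set set \<Rightarrow> 'a set \<Rightarrow> bool" where
  "shatters F Y \<longleftrightarrow> (\<lambda>S. Y \<inter> S) ` F = Pow Y"

definition VC :: "'a set \<Rightarrow> 'a set set \<Rightarrow> enat" where
  "VC X F = (SUP Y \<in> {Y. Y \<subseteq> X \<and> finite Y \<and> shatters F Y}. enat (card Y))"

definition VC_left :: "('a, 'b) monoid_scheme \<Rightarrow> 'a set \<Rightarrow> 'a set \<Rightarrow> enat" where
  "VC_left G B A = VC (carrier G) ((\<lambda>x. x <#\<^bsub>G\<^esub> A) ` B)"

definition VC_right :: "('a, 'b) monoid_scheme \<Rightarrow> 'a set \<Rightarrow> 'a set \<Rightarrow> enat" where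
  "VC_right G B A = VC (carrier G) ((\<lambda>x. A #>\<^bsub>G\<^esub> x) ` B)"

end

(*
  A family of sets has VC dimension 0 exactly when it has at most one member, so every
  statement is about when the translates xA, x in B, all coincide.  Since BA is the union
  of these translates, each of size |A|, this happens iff |BA| = |A|.  Moreover xA = yA
  iff y^-1 x lies in the left stabilizer S = {g. gA = A}, a subgroup with Sa contained
  in A for every a in A.  For B = A^-1 this yields A = Sa; for B = A it yields A inside
  aS, and counting forces A = aS = Sa.  Right translates are the left translates of the
  opposite group, so the right-handed statements need no separate proof.
*)
theory Submission
  imports Defs "HOL-Algebra.Group_Action"
begin

lemma shatters_subset:
  assumes "shatters F Y" and "Z \<subseteq> Y"
  shows "shatters F Z"
  unfolding shatters_def
proof (rule equalityI)
  show "Pow Z \<subseteq> (\<lambda>S. Z \<inter> S) ` F"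
  proof
    fix W assume "W \<in> Pow Z"
    then have "W \<in> (\<lambda>S. Y \<inter> S) ` F"
      using assms by (auto simp: shatters_def)
    then obtain S where "S \<in> F" "W = Y \<inter> S" by blast
    then show "W \<in> (\<lambda>S. Z \<inter> S) ` F" using \<open>W \<in> Pow Z\<close> \<open>Z \<subseteq> Y\<close> by auto
  qed
qed auto

lemma shatters_singleton_iff:
  "shatters F {g} \<longleftrightarrow> (\<exists>S\<in>F. g \<in> S) \<and> (\<exists>S\<in>F. g \<notin> S)"
proof
  assume "shatters F {g}"
  then have "{g} \<in> (\<lambda>S. {g} \<inter> S) ` F" and "{} \<in> (\<lambda>S. {g} \<inter> S) ` F"
    by (auto simp: shatters_def)
  then show "(\<exists>S\<in>F. g \<in> S) \<and> (\<exists>S\<in>F. g \<notin> S)"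
    by (auto simp: image_iff)
next
  assume "(\<exists>S\<in>F. g \<in> S) \<and> (\<exists>S\<in>F. g \<notin> S)"
  then obtain S T where "S \<in> F" "g \<in> S" "T \<in> F" "g \<notin> T" by blast
  then have "{g} \<inter> S = {g}" "{g} \<inter> T = {}" by auto
  moreover have "Pow {g} = {{}, {g}}" by blast
  ultimately show "shatters F {g}"
    unfolding shatters_def using \<open>S \<in> F\<close> \<open>T \<in> F\<close> by (auto simp: image_iff)
qed

lemma VC_eq_0_iff:
  assumes "F \<subseteq> Pow X"
  shows "VC X F = 0 \<longleftrightarrow> (\<forall>S\<in>F. \<forall>T\<in>F. S = T)"
proof -
  have "VC X F = 0 \<longleftrightarrow> (\<forall>Y. Y \<subseteq> X \<and> finite Y \<and> shatters F Y \<longrightarrow> Y = {})"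
    unfolding VC_def bot_enat_def [symmetric] SUP_bot_conv by (auto simp: bot_enat_def zero_enat_def)
  also have "\<dots> \<longleftrightarrow> (\<forall>g\<in>X. \<not> shatters F {g})"
  proof
    assume "\<forall>Y. Y \<subseteq> X \<and> finite Y \<and> shatters F Y \<longrightarrow> Y = {}"
    then show "\<forall>g\<in>X. \<not> shatters F {g}" by blast
  next
    assume none: "\<forall>g\<in>X. \<not> shatters F {g}"
    show "\<forall>Y. Y \<subseteq> X \<and> finite Y \<and> shatters F Y \<longrightarrow> Y = {}"
    proof (intro allI impI)
      fix Y assume Y: "Y \<subseteq> X \<and> finite Y \<and> shatters F Y"
      show "Y = {}"
      proof (rule ccontr)
        assume "Y \<noteq> {}"
        then obtain g where "g \<in> Y" by blast
        then show False using none Y shatters_subset[of F Y "{g}"] by blast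
      qed
    qed
  qed
  also have "\<dots> \<longleftrightarrow> (\<forall>S\<in>F. \<forall>T\<in>F. S = T)"
    using assms unfolding shatters_singleton_iff by blast
  finally show ?thesis .
qed

definition opposite_group :: "('a, 'b) monoid_scheme \<Rightarrow> ('a, 'b) monoid_scheme" where
  "opposite_group G = G\<lparr>mult := \<lambda>x y. y \<otimes>\<^bsub>G\<^esub> x\<rparr>"

lemma opposite_group_simps [simp]:
  "carrier (opposite_group G) = carrier G"
  "\<one>\<^bsub>opposite_group G\<^esub> = \<one>\<^bsub>G\<^esub>"
  "x \<otimes>\<^bsub>opposite_group G\<^esub> y = y \<otimes>\<^bsub>G\<^esub> x"
  by (simp_all add: opposite_group_def)

lemma inv_opposite_group [simp]: "inv\<^bsub>opposite_group G\<^esub> x = inv\<^bsub>G\<^esub> x"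
  unfolding m_inv_def opposite_group_simps by meson

lemma (in group) group_opposite_group: "group (opposite_group G)"
proof (rule groupI)
  fix x assume "x \<in> carrier (opposite_group G)"
  then show "\<exists>y\<in>carrier (opposite_group G). y \<otimes>\<^bsub>opposite_group G\<^esub> x = \<one>\<^bsub>opposite_group G\<^esub>"
    by (auto intro: bexI [of _ "inv x"])
qed (simp_all add: m_assoc)

lemma l_coset_opposite_group [simp]: "x <#\<^bsub>opposite_group G\<^esub> A = A #>\<^bsub>G\<^esub> x"
  by (simp add: l_coset_def r_coset_def)

lemma r_coset_opposite_group [simp]: "A #>\<^bsub>opposite_group G\<^esub> x = x <#\<^bsub>G\<^esub> A"
  by (simp add: l_coset_def r_coset_def)

lemma set_mult_opposite_group [simp]: "A <#>\<^bsub>opposite_group G\<^esub> B = B <#>\<^bsub>G\<^esub> A"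
  by (auto simp: set_mult_def)

lemma set_inv_opposite_group [simp]: "set_inv\<^bsub>opposite_group G\<^esub> A = set_inv\<^bsub>G\<^esub> A"
  by (simp add: SET_INV_def)

lemma subgroup_opposite_group_iff [simp]: "subgroup H (opposite_group G) \<longleftrightarrow> subgroup H G"
  unfolding subgroup_def by auto

lemma VC_left_opposite_group [simp]: "VC_left (opposite_group G) B A = VC_right G B A"
  by (simp add: VC_left_def VC_right_def)

definition left_stabilizer :: "('a, 'b) monoid_scheme \<Rightarrow> 'a set \<Rightarrow> 'a set" where
  "left_stabilizer G A = {g \<in> carrier G. g <#\<^bsub>G\<^esub> A = A}"

context group
begin

lemma l_coset_eq_image: "x <# A = (\<lambda>a. x \<otimes> a) ` A"
  by (auto simp: l_coset_def)

lemma card_l_coset: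
  assumes "x \<in> carrier G" and "A \<subseteq> carrier G"
  shows "card (x <# A) = card A"
  unfolding l_coset_eq_image
  using card_image [OF inj_on_subset [OF inj_on_cmult [OF assms(1)] assms(2)]] .

lemma finite_l_coset_iff:
  assumes "x \<in> carrier G" and "A \<subseteq> carrier G"
  shows "finite (x <# A) \<longleftrightarrow> finite A"
  unfolding l_coset_eq_image
  using finite_image_iff [OF inj_on_subset [OF inj_on_cmult [OF assms(1)] assms(2)]] .

lemma card_r_coset:
  assumes "x \<in> carrier G" and "A \<subseteq> carrier G"
  shows "card (A #> x) = card A"
  using group.card_l_coset [OF group_opposite_group] assms by simp

lemma finite_r_coset_iff:
  assumes "x \<in> carrier G" and "A \<subseteq> carrier G"
  shows "finite (A #> x) \<longleftrightarrow> finite A"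
  using group.finite_l_coset_iff [OF group_opposite_group] assms by simp

lemma set_mult_eq_UN_l_coset: "B <#> A = (\<Union>x\<in>B. x <# A)"
  by (auto simp: set_mult_def l_coset_def)

lemma card_set_mult_eq_card_iff:
  assumes "A \<subseteq> carrier G" "finite A" "B \<subseteq> carrier G" "finite B" "B \<noteq> {}"
  shows "card (B <#> A) = card A \<longleftrightarrow> (\<forall>x\<in>B. \<forall>y\<in>B. x <# A = y <# A)"
proof
  assume card_eq: "card (B <#> A) = card A"
  have translate: "x \<in> carrier G" "finite (x <# A)" "card (x <# A) = card A" if "x \<in> B" for x
  proof -
    show "x \<in> carrier G" using that assms(3) by blast
    then show "finite (x <# A)" "card (x <# A) = card A"
      using assms(1,2) finite_l_coset_iff card_l_coset by simp_all
  qed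
  have "finite (B <#> A)"
    unfolding set_mult_eq_UN_l_coset using assms(4) translate(2) by (rule finite_UN_I)
  have "x <# A = B <#> A" if "x \<in> B" for x
  proof (rule card_subset_eq)
    show "x <# A \<subseteq> B <#> A"
      using that by (auto simp: set_mult_eq_UN_l_coset)
    show "card (x <# A) = card (B <#> A)"
      using translate(3) [OF that] card_eq by simp
  qed fact
  then show "\<forall>x\<in>B. \<forall>y\<in>B. x <# A = y <# A" by simp
next
  assume all_eq: "\<forall>x\<in>B. \<forall>y\<in>B. x <# A = y <# A"
  obtain b where "b \<in> B" using assms(5) by blast
  then have "x <# A = b <# A" if "x \<in> B" for x
    using all_eq that by blast
  then have "B <#> A = (\<Union>x\<in>B. b <# A)"
    unfolding set_mult_eq_UN_l_coset by (rule SUP_cong [OF refl])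
  also have "\<dots> = b <# A"
    using \<open>b \<in> B\<close> by blast
  finally have "B <#> A = b <# A" .
  moreover have "b \<in> carrier G" using \<open>b \<in> B\<close> assms(3) by blast
  ultimately show "card (B <#> A) = card A"
    using assms(1) card_l_coset by simp
qed

lemma VC_left_eq_0_iff:
  assumes "B \<subseteq> carrier G" and "A \<subseteq> carrier G"
  shows "VC_left G B A = 0 \<longleftrightarrow> (\<forall>x\<in>B. \<forall>y\<in>B. x <# A = y <# A)"
proof -
  have "(\<lambda>x. x <# A) ` B \<subseteq> Pow (carrier G)"
    using assms l_coset_subset_G by blast
  then show ?thesis unfolding VC_left_def by (simp add: VC_eq_0_iff)
qed

lemma VC_left_eq_0_iff_card_set_mult:
  assumes "A \<subseteq> carrier G" "finite A" "B \<subseteq> carrier G" "finite B" "B \<noteq> {}"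
  shows "VC_left G B A = 0 \<longleftrightarrow> card (B <#> A) = card A"
  using VC_left_eq_0_iff card_set_mult_eq_card_iff assms by simp

lemma subgroup_left_stabilizer:
  assumes "A \<subseteq> carrier G"
  shows "subgroup (left_stabilizer G A) G"
proof (rule subgroupI)
  show "left_stabilizer G A \<subseteq> carrier G"
    by (auto simp: left_stabilizer_def)
  have "\<one> \<in> left_stabilizer G A"
    using assms by (simp add: left_stabilizer_def lcos_mult_one)
  then show "left_stabilizer G A \<noteq> {}" by blast
next
  fix g assume "g \<in> left_stabilizer G A"
  then have g: "g \<in> carrier G" "g <# A = A" by (auto simp: left_stabilizer_def)
  have "inv g <# A = inv g <# (g <# A)" using g(2) by simp
  also have "\<dots> = A"
    using g(1) assms by (simp add: lcos_m_assoc lcos_mult_one)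
  finally show "inv g \<in> left_stabilizer G A"
    using g(1) by (simp add: left_stabilizer_def)
next
  fix g h assume "g \<in> left_stabilizer G A" "h \<in> left_stabilizer G A"
  then have "g \<in> carrier G" "h \<in> carrier G" "g <# A = A" "h <# A = A"
    by (auto simp: left_stabilizer_def)
  then have "(g \<otimes> h) <# A = A"
    using assms by (simp add: lcos_m_assoc [symmetric])
  then show "g \<otimes> h \<in> left_stabilizer G A"
    using \<open>g \<in> carrier G\<close> \<open>h \<in> carrier G\<close> by (simp add: left_stabilizer_def)
qed

lemma l_coset_eq_iff_left_stabilizer:
  assumes "x \<in> carrier G" "y \<in> carrier G" "A \<subseteq> carrier G"
  shows "x <# A = y <# A \<longleftrightarrow> inv y \<otimes> x \<in> left_stabilizer G A"
proof
  assume eq: "x <# A = y <# A"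
  have "(inv y \<otimes> x) <# A = inv y <# (x <# A)"
    using assms by (simp add: lcos_m_assoc)
  also have "\<dots> = inv y <# (y <# A)" using eq by simp
  also have "\<dots> = A"
    using assms by (simp add: lcos_m_assoc lcos_mult_one)
  finally show "inv y \<otimes> x \<in> left_stabilizer G A"
    using assms by (simp add: left_stabilizer_def)
next
  assume "inv y \<otimes> x \<in> left_stabilizer G A"
  then have "(inv y \<otimes> x) <# A = A" by (simp add: left_stabilizer_def)
  then have "y <# ((inv y \<otimes> x) <# A) = y <# A" by simp
  then show "x <# A = y <# A"
    using assms by (simp add: lcos_m_assoc m_assoc [symmetric])
qed

lemma r_coset_left_stabilizer_subset:
  assumes "a \<in> A"
  shows "left_stabilizer G A #> a \<subseteq> A"
proof
  fix x assume "x \<in> left_stabilizer G A #> a"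
  then obtain g where "g <# A = A" "x = g \<otimes> a"
    by (auto simp: left_stabilizer_def r_coset_def)
  then show "x \<in> A"
    using assms by (metis l_coset_def UN_I singletonI)
qed

lemma subgroup_subset_left_stabilizer:
  assumes "subgroup H G" and "a \<in> carrier G"
  shows "H \<subseteq> left_stabilizer G (H #> a)"
proof
  fix h assume "h \<in> H"
  have "h \<in> carrier G" "H \<subseteq> carrier G"
    using \<open>h \<in> H\<close> assms(1) by (auto dest: subgroup.mem_carrier subgroup.subset)
  then have "h <# (H #> a) = (h <# H) #> a"
    using assms(2) by (simp add: coset_assoc)
  moreover have "h <# H = H"
    using coset_join3 [OF \<open>h \<in> carrier G\<close> assms(1) \<open>h \<in> H\<close>] .
  ultimately show "h \<in> left_stabilizer G (H #> a)"
    using \<open>h \<in> carrier G\<close> by (simp add: left_stabilizer_def)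
qed

lemma mult_inv_mem_of_r_coset:
  assumes "subgroup H G" "a \<in> carrier G" "x \<in> H #> a" "y \<in> H #> a"
  shows "x \<otimes> inv y \<in> H"
proof -
  have carrier: "x \<in> carrier G" "y \<in> carrier G"
    using assms r_coset_subset_G subgroup.subset by blast+
  have "H #> a = H #> y"
    using repr_independence [OF assms(4,2,1)] .
  then show ?thesis
    using subgroup.rcos_module [OF assms(1) is_group carrier(2,1)] assms(3) by simp
qed

lemma inv_mult_mem_of_l_coset:
  assumes "subgroup H G" "a \<in> carrier G" "x \<in> a <# H" "y \<in> a <# H"
  shows "inv y \<otimes> x \<in> H"
  using group.mult_inv_mem_of_r_coset [OF group_opposite_group] assms by simp

lemma l_coset_eq_conjugate_r_coset:
  assumes "subgroup H G" and "a \<in> carrier G"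
  shows "subgroup (a <# H #> inv a) G" and "a <# H = (a <# H #> inv a) #> a"
proof -
  show "subgroup (a <# H #> inv a) G"
    using subgroup_conjugation_is_surj1 [of "inv a" H] assms by simp
  show "a <# H = (a <# H #> inv a) #> a"
    using assms by (simp add: coset_mult_assoc l_coset_subset_G subgroup.subset)
qed

lemma inv_translates_eq_iff_coset:
  assumes "A \<subseteq> carrier G" and "A \<noteq> {}"
  shows "(\<forall>x\<in>set_inv A. \<forall>y\<in>set_inv A. x <# A = y <# A) \<longleftrightarrow>
    (\<exists>H a. subgroup H G \<and> a \<in> carrier G \<and> (A = a <# H \<or> A = H #> a))"
proof -
  let ?S = "left_stabilizer G A"
  have "(\<forall>x\<in>set_inv A. \<forall>y\<in>set_inv A. x <# A = y <# A) \<longleftrightarrow> (\<forall>b\<in>A. \<forall>c\<in>A. c \<otimes> inv b \<in> ?S)"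
    using assms(1) by (auto simp: SET_INV_def l_coset_eq_iff_left_stabilizer subset_iff)
  also have "\<dots> \<longleftrightarrow> (\<exists>H a. subgroup H G \<and> a \<in> carrier G \<and> A = H #> a)"
  proof
    assume quotients: "\<forall>b\<in>A. \<forall>c\<in>A. c \<otimes> inv b \<in> ?S"
    obtain a where "a \<in> A" using assms(2) by blast
    then have "a \<in> carrier G" using assms(1) by blast
    have "A \<subseteq> ?S #> a"
    proof
      fix c assume "c \<in> A"
      then have "c \<in> carrier G" "c \<otimes> inv a \<in> ?S"
        using assms(1) quotients \<open>a \<in> A\<close> by blast+
      then show "c \<in> ?S #> a"
        using subgroup.rcos_module [OF subgroup_left_stabilizer [OF assms(1)] is_group \<open>a \<in> carrier G\<close>]
        by blast
    qed
    then have "A = ?S #> a"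
      using r_coset_left_stabilizer_subset [OF \<open>a \<in> A\<close>] by blast
    then show "\<exists>H a. subgroup H G \<and> a \<in> carrier G \<and> A = H #> a"
      using subgroup_left_stabilizer [OF assms(1)] \<open>a \<in> carrier G\<close> by blast
  next
    assume "\<exists>H a. subgroup H G \<and> a \<in> carrier G \<and> A = H #> a"
    then obtain H a where "subgroup H G" "a \<in> carrier G" "A = H #> a" by blast
    then show "\<forall>b\<in>A. \<forall>c\<in>A. c \<otimes> inv b \<in> ?S"
      using mult_inv_mem_of_r_coset subgroup_subset_left_stabilizer by blast
  qed
  also have "\<dots> \<longleftrightarrow> (\<exists>H a. subgroup H G \<and> a \<in> carrier G \<and> (A = a <# H \<or> A = H #> a))"
    using l_coset_eq_conjugate_r_coset by blast
  finally show ?thesis .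
qed

lemma left_stabilizer_cosets_eq:
  assumes "A \<subseteq> carrier G" "finite A" "a \<in> A" and "A \<subseteq> a <# left_stabilizer G A"
  shows "A = a <# left_stabilizer G A" and "left_stabilizer G A #> a = A"
proof -
  let ?S = "left_stabilizer G A"
  have "a \<in> carrier G" "?S \<subseteq> carrier G"
    using assms(1,3) subgroup.subset [OF subgroup_left_stabilizer [OF assms(1)]] by blast+
  have "?S #> a \<subseteq> A"
    using r_coset_left_stabilizer_subset [OF assms(3)] .
  then have "finite ?S"
    using assms(2) finite_subset finite_r_coset_iff [OF \<open>a \<in> carrier G\<close> \<open>?S \<subseteq> carrier G\<close>] by blast
  then have "finite (a <# ?S)"
    using finite_l_coset_iff [OF \<open>a \<in> carrier G\<close> \<open>?S \<subseteq> carrier G\<close>] by blast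
  have card_S: "card (a <# ?S) = card ?S" "card (?S #> a) = card ?S"
    using card_l_coset card_r_coset \<open>a \<in> carrier G\<close> \<open>?S \<subseteq> carrier G\<close> by blast+
  show "A = a <# ?S"
    using card_seteq [OF \<open>finite (a <# ?S)\<close> assms(4)] card_S
      card_mono [OF assms(2) \<open>?S #> a \<subseteq> A\<close>] by simp
  show "?S #> a = A"
    using card_seteq [OF assms(2) \<open>?S #> a \<subseteq> A\<close>] card_S
      card_mono [OF \<open>finite (a <# ?S)\<close> assms(4)] by simp
qed

lemma translates_eq_iff_normalized_coset:
  assumes "A \<subseteq> carrier G" "finite A" "A \<noteq> {}"
  shows "(\<forall>x\<in>A. \<forall>y\<in>A. x <# A = y <# A) \<longleftrightarrow>
    (\<exists>H a. subgroup H G \<and> a \<in> carrier G \<and> A = a <# H \<and> a <# H = H #> a)"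
proof -
  let ?S = "left_stabilizer G A"
  have "(\<forall>x\<in>A. \<forall>y\<in>A. x <# A = y <# A) \<longleftrightarrow> (\<forall>x\<in>A. \<forall>y\<in>A. inv y \<otimes> x \<in> ?S)"
    using assms(1) by (meson l_coset_eq_iff_left_stabilizer subsetD)
  also have "\<dots> \<longleftrightarrow> (\<exists>H a. subgroup H G \<and> a \<in> carrier G \<and> A = a <# H \<and> a <# H = H #> a)"
  proof
    assume quotients: "\<forall>x\<in>A. \<forall>y\<in>A. inv y \<otimes> x \<in> ?S"
    obtain a where "a \<in> A" using assms(3) by blast
    then have "a \<in> carrier G" using assms(1) by blast
    have "A \<subseteq> a <# ?S"
    proof
      fix x assume "x \<in> A"
      then have "x \<in> carrier G" "inv a \<otimes> x \<in> ?S"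
        using assms(1) quotients \<open>a \<in> A\<close> by blast+
      then show "x \<in> a <# ?S"
        using subgroup.lcos_module_rev [OF subgroup_left_stabilizer [OF assms(1)] is_group \<open>a \<in> carrier G\<close>]
        by blast
    qed
    then show "\<exists>H a. subgroup H G \<and> a \<in> carrier G \<and> A = a <# H \<and> a <# H = H #> a"
      using left_stabilizer_cosets_eq [OF assms(1,2) \<open>a \<in> A\<close>] subgroup_left_stabilizer [OF assms(1)]
        \<open>a \<in> carrier G\<close> by metis
  next
    assume "\<exists>H a. subgroup H G \<and> a \<in> carrier G \<and> A = a <# H \<and> a <# H = H #> a"
    then obtain H a where "subgroup H G" "a \<in> carrier G" "A = a <# H" "a <# H = H #> a" by blast
    then show "\<forall>x\<in>A. \<forall>y\<in>A. inv y \<otimes> x \<in> ?S"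
      using inv_mult_mem_of_l_coset subgroup_subset_left_stabilizer by (metis subsetD)
  qed
  finally show ?thesis .
qed

end

theorem proposition2p19:
  fixes G (structure) and A :: "'a set"
  assumes "group G" and "A \<subseteq> carrier G" and "finite A" and "A \<noteq> {}"
  shows "(\<forall>B. B \<subseteq> carrier G \<and> finite B \<and> B \<noteq> {} \<longrightarrow>
            (VC_left G B A = 0 \<longleftrightarrow> card (B <#> A) = card A) \<and>
            (VC_right G B A = 0 \<longleftrightarrow> card (A <#> B) = card A))
       \<and> (let Ai = set_inv A;
              cos = (\<exists>H a. subgroup H G \<and> a \<in> carrier G \<and> (A = a <# H \<or> A = H #> a))
          in (VC_left G Ai A = 0 \<longleftrightarrow> cos) \<and> (VC_right G Ai A = 0 \<longleftrightarrow> cos) \<and>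
             (card (A <#> Ai) = card A \<longleftrightarrow> cos) \<and> (card (Ai <#> A) = card A \<longleftrightarrow> cos))
       \<and> (let nc = (\<exists>H a. subgroup H G \<and> a \<in> carrier G \<and> A = a <# H \<and> a <# H = H #> a)
          in (VC_left G A A = 0 \<longleftrightarrow> nc) \<and> (VC_right G A A = 0 \<longleftrightarrow> nc) \<and>
             (card (A <#> A) = card A \<longleftrightarrow> nc))"
proof -
  interpret group G by fact
  interpret opp: group "opposite_group G" by (rule group_opposite_group)
  have A: "A \<subseteq> carrier G" "finite A" "A \<noteq> {}" by fact+
  have Ai: "set_inv A \<subseteq> carrier G" "finite (set_inv A)" "set_inv A \<noteq> {}"
    using A by (auto simp: SET_INV_def)
  define cos where "cos \<longleftrightarrow> (\<exists>H a. subgroup H G \<and> a \<in> carrier G \<and> (A = a <# H \<or> A = H #> a))"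
  define nc where "nc \<longleftrightarrow> (\<exists>H a. subgroup H G \<and> a \<in> carrier G \<and> A = a <# H \<and> a <# H = H #> a)"
  have cos_opp: "cos \<longleftrightarrow> (\<exists>H a. subgroup H G \<and> a \<in> carrier G \<and> (A = H #> a \<or> A = a <# H))"
    unfolding cos_def by blast
  have nc_opp: "nc \<longleftrightarrow> (\<exists>H a. subgroup H G \<and> a \<in> carrier G \<and> A = H #> a \<and> H #> a = a <# H)"
    unfolding nc_def by metis
  have part_a: "VC_left G B A = 0 \<longleftrightarrow> card (B <#> A) = card A"
    "VC_right G B A = 0 \<longleftrightarrow> card (A <#> B) = card A"
    if "B \<subseteq> carrier G" "finite B" "B \<noteq> {}" for B
    using VC_left_eq_0_iff_card_set_mult [OF A(1,2) that]
      opp.VC_left_eq_0_iff_card_set_mult [of A B] A that by simp_all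
  have "VC_left G (set_inv A) A = 0 \<longleftrightarrow> cos"
    using VC_left_eq_0_iff [OF Ai(1) A(1)] inv_translates_eq_iff_coset [OF A(1,3)]
    by (simp add: cos_def)
  moreover have "VC_right G (set_inv A) A = 0 \<longleftrightarrow> cos"
    using opp.VC_left_eq_0_iff [of "set_inv A" A] opp.inv_translates_eq_iff_coset [of A] A Ai
    by (simp add: cos_opp)
  moreover have "VC_left G A A = 0 \<longleftrightarrow> nc"
    using VC_left_eq_0_iff [OF A(1) A(1)] translates_eq_iff_normalized_coset [OF A]
    by (simp add: nc_def)
  moreover have "VC_right G A A = 0 \<longleftrightarrow> nc"
    using opp.VC_left_eq_0_iff [of A A] opp.translates_eq_iff_normalized_coset [of A] A
    by (simp add: nc_opp)
  ultimately show ?thesis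
    unfolding Let_def cos_def [symmetric] nc_def [symmetric]
    using part_a A Ai by simp
qed
end
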